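(* Let $k$ be a positive integer and $F$ a 2-factor on $n$ vertices. Then there exists a partition of $V(F)$ into parts $U_0,U_1,\dots,U_{\lfloor n/k\rfloor}$ such that $|U_i|=k$ for all $1\le i\le\lfloor n/k\rfloor$ (hence $|U_0|<k$), and such that for every $0\le i\le\lfloor n/k\rfloor$, the subgraph of $F$ induced by $U_i$ is a disjoint union of cycles and at most $2$ paths. In particular, for every $1\le i\le\lfloor n/k\rfloor$, $F[U_i]$ contains at least $k-2$ edges.
   Context: A 2-factor on $n$ vertices is a 2-regular graph on $n$ vertices. *)

theory Defs
  imports Main
begin

definition simple_graph :: "'a set \<Rightarrow> 'a set set \<Rightarrow> bool" where
  "simple_graph V E \<longleftrightarrow> finite V \<and>
     (\<forall>e\<in>E. \<exists>u v. u \<noteq> v \<and> e = {u, v} \<and> u \<in> V \<and> v \<in> V)"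

definition degree :: "'a set set \<Rightarrow> 'a \<Rightarrow> nat" where
  "degree E v = card {e \<in> E. v \<in> e}"

definition two_factor :: "'a set \<Rightarrow> 'a set set \<Rightarrow> bool" where
  "two_factor V E \<longleftrightarrow> simple_graph V E \<and> (\<forall>v\<in>V. degree E v = 2)"

definition induced_edges :: "'a set set \<Rightarrow> 'a set \<Rightarrow> 'a set set" where
  "induced_edges E U = {e \<in> E. e \<subseteq> U}"

definition is_path_on :: "'a set set \<Rightarrow> 'a set \<Rightarrow> bool" where
  "is_path_on E C \<longleftrightarrow> (\<exists>vs. vs \<noteq> [] \<and> distinct vs \<and> set vs = C \<and>
     induced_edges E C = {{vs ! i, vs ! (i + 1)} | i. i + 1 < length vs})"

definition is_cycle_on :: "'a set set \<Rightarrow> 'a set \<Rightarrow> bool" where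
  "is_cycle_on E C \<longleftrightarrow> (\<exists>vs. length vs \<ge> 3 \<and> distinct vs \<and> set vs = C \<and>
     induced_edges E C = {{vs ! i, vs ! ((i + 1) mod length vs)} | i. i < length vs})"

definition cycles_and_two_paths :: "'a set set \<Rightarrow> 'a set \<Rightarrow> bool" where
  "cycles_and_two_paths E U \<longleftrightarrow> (\<exists>Cs Ps.
     finite Cs \<and> finite Ps \<and> Cs \<inter> Ps = {} \<and> card Ps \<le> 2 \<and>
     \<Union>(Cs \<union> Ps) = U \<and>
     (\<forall>A\<in>Cs \<union> Ps. \<forall>B\<in>Cs \<union> Ps. A \<noteq> B \<longrightarrow> A \<inter> B = {}) \<and>
     (\<forall>e\<in>induced_edges E U. \<exists>A\<in>Cs \<union> Ps. e \<subseteq> A) \<and>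
     (\<forall>A\<in>Cs. is_cycle_on E A) \<and> (\<forall>A\<in>Ps. is_path_on E A))"

end

(*
  A 2-factor is a vertex-disjoint union of cycles, each of which is a whole connected
  component: the last vertex of a longest path has both of its neighbours on the path,
  and since interior vertices already have degree 2, one of them must be the first vertex,
  closing the path into a cycle that no other edge touches.  Writing these cycles one
  after another gives an ordering of V, which we cut into consecutive blocks of k vertices,
  the incomplete last block becoming U 0.  A block of consecutive vertices consists of
  whole cycles and an arc of the cycle at either end, and an arc of a component cycle
  induces a path, so every block induces cycles and at most two paths.  A cycle has as many
  edges as vertices and a path one fewer, which gives at least k - 2 edges in each full block.
*)
theory Submission
  imports Defs
begin

lemma set_take_drop_eq_nth_image:
  "set (take l (drop a xs)) = (\<lambda>i. xs ! i) ` {a..<min (a + l) (length xs)}"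
proof -
  have "take l (drop a xs) = map (\<lambda>i. xs ! i) [a..<min (a + l) (length xs)]"
    by (rule nth_equalityI) auto
  then show ?thesis by simp
qed

lemma nth_in_set_take_drop_iff:
  assumes "distinct xs" and "i < length xs"
  shows "xs ! i \<in> set (take l (drop a xs)) \<longleftrightarrow> a \<le> i \<and> i < a + l"
proof -
  have "inj_on (\<lambda>i. xs ! i) {..<length xs}"
    using assms(1) by (simp add: inj_on_nth)
  then have "xs ! i \<in> (\<lambda>i. xs ! i) ` {a..<min (a + l) (length xs)} \<longleftrightarrow>
      i \<in> {a..<min (a + l) (length xs)}"
    by (rule inj_on_image_mem_iff) (use assms(2) in auto)
  then show ?thesis
    using assms(2) by (simp add: set_take_drop_eq_nth_image)
qed

lemma set_take_drop_subset: "set (take l (drop a xs)) \<subseteq> set xs"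
  by (meson set_drop_subset set_take_subset subset_trans)

definition cycle_edges :: "'a list \<Rightarrow> 'a set set" where
  "cycle_edges c = {{c ! i, c ! (Suc i mod length c)} | i. i < length c}"

definition path_edges :: "'a list \<Rightarrow> 'a set set" where
  "path_edges p = {{p ! i, p ! Suc i} | i. Suc i < length p}"

lemma cycle_edgesI: "i < length c \<Longrightarrow> {c ! i, c ! (Suc i mod length c)} \<in> cycle_edges c"
  unfolding cycle_edges_def by blast

lemma path_edgesI: "Suc i < length p \<Longrightarrow> {p ! i, p ! Suc i} \<in> path_edges p"
  unfolding path_edges_def by blast

lemma cycle_edges_subset:
  assumes "e \<in> cycle_edges c"
  shows "e \<subseteq> set c"
proof -
  obtain i where "i < length c" and e: "e = {c ! i, c ! (Suc i mod length c)}"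
    using assms unfolding cycle_edges_def by blast
  then have "Suc i mod length c < length c"
    by (intro mod_less_divisor) linarith
  with \<open>i < length c\<close> show ?thesis
    unfolding e by simp
qed

lemma path_edges_subset:
  assumes "e \<in> path_edges p"
  shows "e \<subseteq> set p"
proof -
  obtain i where "Suc i < length p" and "e = {p ! i, p ! Suc i}"
    using assms unfolding path_edges_def by blast
  then show ?thesis
    by simp
qed

lemma Suc_mod_swap_impossible:
  fixes i j L :: nat
  assumes "3 \<le> L" "i < L" "j < L" "Suc i mod L = j" "Suc j mod L = i"
  shows False
proof -
  have succ: "Suc k mod L = (if Suc k = L then 0 else Suc k)" if "k < L" for k
    using that by (simp add: mod_Suc)
  show False
  proof (cases "Suc i = L")
    case True
    then show False using assms succ[of j] by (auto split: if_splits)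
  next
    case False
    then show False using assms succ[of i] succ[of j] by (auto split: if_splits)
  qed
qed

lemma two_cycle_edges_at:
  assumes "distinct c" and "3 \<le> length c" and "z \<in> set c"
  obtains A B where "A \<in> cycle_edges c" "B \<in> cycle_edges c" "A \<noteq> B" "z \<in> A" "z \<in> B"
proof -
  let ?L = "length c"
  obtain i where i: "i < ?L" "z = c ! i"
    using assms(3) by (auto simp: in_set_conv_nth)
  define j where "j = (if i = 0 then ?L - 1 else i - 1)"
  have "j < ?L" and j_succ: "Suc j mod ?L = i"
    using assms(2) i(1) unfolding j_def by auto
  have succ: "Suc i mod ?L < ?L"
    using assms(2) by (intro mod_less_divisor) linarith
  have "j \<noteq> Suc i mod ?L"
    using Suc_mod_swap_impossible[OF assms(2) i(1) \<open>j < ?L\<close> _ j_succ] by blast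
  moreover have "j \<noteq> i"
    using assms(2) i(1) unfolding j_def by auto
  ultimately have "c ! j \<notin> {c ! i, c ! (Suc i mod ?L)}"
    using nth_eq_iff_index_eq[OF assms(1) \<open>j < ?L\<close>] i(1) succ by auto
  then have "{c ! j, c ! i} \<noteq> {c ! i, c ! (Suc i mod ?L)}"
    by (metis insertI1)
  moreover have "{c ! j, c ! i} \<in> cycle_edges c"
    using cycle_edgesI[OF \<open>j < ?L\<close>] j_succ by simp
  ultimately show thesis
    using that cycle_edgesI[OF i(1)] i(2) by simp
qed

lemma path_edges_take_drop_subset: "path_edges (take l (drop a c)) \<subseteq> cycle_edges c"
proof
  let ?p = "take l (drop a c)"
  fix e assume "e \<in> path_edges ?p"
  then obtain t where t: "Suc t < length ?p" and e: "e = {?p ! t, ?p ! Suc t}"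
    unfolding path_edges_def by blast
  then have "Suc t < length c - a"
    by simp
  then have "Suc (a + t) < length c"
    by linarith
  then have "e = {c ! (a + t), c ! (Suc (a + t) mod length c)}"
    using e t by simp
  then show "e \<in> cycle_edges c"
    using cycle_edgesI[of "a + t" c] \<open>Suc (a + t) < length c\<close> by simp
qed

lemma cycle_edge_within_take_drop:
  assumes "distinct c" and "e \<in> cycle_edges c" and e_within: "e \<subseteq> set (take l (drop a c))"
    and not_whole: "\<not> (a = 0 \<and> length c \<le> l)"
  shows "e \<in> path_edges (take l (drop a c))"
proof -
  let ?L = "length c" and ?p = "take l (drop a c)"
  obtain i where "i < ?L" and e: "e = {c ! i, c ! (Suc i mod ?L)}"
    using assms(2) unfolding cycle_edges_def by blast
  have mem: "c ! i' \<in> set ?p \<longleftrightarrow> a \<le> i' \<and> i' < a + l" if "i' < ?L" for i'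
    using nth_in_set_take_drop_iff[OF assms(1) that] .
  have i: "a \<le> i" "i < a + l"
    using mem[OF \<open>i < ?L\<close>] e_within e by simp_all
  have "Suc i < ?L"
  proof (rule ccontr)
    assume "\<not> Suc i < ?L"
    then have "Suc i = ?L"
      using \<open>i < ?L\<close> by simp
    then have "c ! 0 \<in> set ?p"
      using e_within e by simp
    moreover have "0 < ?L"
      using \<open>i < ?L\<close> by linarith
    ultimately have "a = 0"
      using mem[of 0] by simp
    then show False
      using not_whole i(2) \<open>Suc i = ?L\<close> by simp
  qed
  then have "Suc i < a + l"
    using mem[OF \<open>Suc i < ?L\<close>] e_within e by simp
  then have "e = {?p ! (i - a), ?p ! Suc (i - a)}" and "Suc (i - a) < length ?p"
    using i e \<open>Suc i < ?L\<close> by (auto simp: Suc_diff_le)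
  then show ?thesis
    unfolding path_edges_def by blast
qed

lemma cycle_edges_subset_path_edges:
  assumes "p \<noteq> []"
  shows "cycle_edges p \<subseteq> insert {last p, hd p} (path_edges p)"
proof
  fix e assume "e \<in> cycle_edges p"
  then obtain i where i: "i < length p" and e: "e = {p ! i, p ! (Suc i mod length p)}"
    unfolding cycle_edges_def by blast
  show "e \<in> insert {last p, hd p} (path_edges p)"
  proof (cases "Suc i < length p")
    case True
    then have "e = {p ! i, p ! Suc i}"
      using e by simp
    with True show ?thesis
      unfolding path_edges_def by blast
  next
    case False
    then have "i = length p - 1" "Suc i = length p"
      using i by simp_all
    then have "e = {last p, hd p}"
      using e assms by (simp add: last_conv_nth hd_conv_nth)
    then show ?thesis
      by simp
  qed
qed

lemma path_edges_snoc_subset: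
  assumes "p \<noteq> []"
  shows "path_edges (p @ [y]) \<subseteq> insert {last p, y} (path_edges p)"
proof
  fix e assume "e \<in> path_edges (p @ [y])"
  then obtain i where i: "Suc i < Suc (length p)" and e: "e = {(p @ [y]) ! i, (p @ [y]) ! Suc i}"
    unfolding path_edges_def by auto
  show "e \<in> insert {last p, y} (path_edges p)"
  proof (cases "Suc i < length p")
    case True
    then have "e = {p ! i, p ! Suc i}"
      using e by (simp add: nth_append)
    with True show ?thesis
      unfolding path_edges_def by blast
  next
    case False
    then have "i = length p - 1" "Suc i = length p"
      using i by simp_all
    then have "e = {last p, y}"
      using e assms by (simp add: nth_append last_conv_nth)
    then show ?thesis
      by simp
  qed
qed

lemma card_cycle_edges:
  assumes "distinct c" and "3 \<le> length c"
  shows "card (cycle_edges c) = length c"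
proof -
  let ?edge = "\<lambda>i. {c ! i, c ! (Suc i mod length c)}"
  have "inj_on ?edge {..<length c}"
  proof (rule inj_onI)
    fix i j assume ij: "i \<in> {..<length c}" "j \<in> {..<length c}" "?edge i = ?edge j"
    have succ: "Suc k mod length c < length c" for k
      using assms(2) by (intro mod_less_divisor) linarith
    have "c ! i = c ! j \<or> c ! i = c ! (Suc j mod length c) \<and> c ! (Suc i mod length c) = c ! j"
      using ij(3) by (auto simp: doubleton_eq_iff)
    then have "i = j \<or> i = Suc j mod length c \<and> Suc i mod length c = j"
      using ij(1,2) succ assms(1) by (simp add: nth_eq_iff_index_eq)
    then show "i = j"
      using Suc_mod_swap_impossible[of "length c" i j] ij(1,2) assms(2) by auto
  qed
  moreover have "cycle_edges c = ?edge ` {..<length c}"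
    unfolding cycle_edges_def by blast
  ultimately show ?thesis
    by (simp add: card_image)
qed

lemma card_path_edges:
  assumes "distinct p"
  shows "card (path_edges p) = length p - 1"
proof -
  let ?edge = "\<lambda>i. {p ! i, p ! Suc i}"
  have "inj_on ?edge {..<length p - 1}"
  proof (rule inj_onI)
    fix i j assume ij: "i \<in> {..<length p - 1}" "j \<in> {..<length p - 1}" "?edge i = ?edge j"
    have "p ! i = p ! j \<or> p ! i = p ! Suc j \<and> p ! Suc i = p ! j"
      using ij(3) by (auto simp: doubleton_eq_iff)
    then have "i = j \<or> i = Suc j \<and> Suc i = j"
      using ij(1,2) assms by (simp add: nth_eq_iff_index_eq)
    then show "i = j"
      by auto
  qed
  moreover have "path_edges p = ?edge ` {..<length p - 1}"
    unfolding path_edges_def by fastforce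
  ultimately show ?thesis
    by (simp add: card_image)
qed

lemma is_cycle_on_iff: "is_cycle_on E C \<longleftrightarrow>
    (\<exists>c. 3 \<le> length c \<and> distinct c \<and> set c = C \<and> induced_edges E C = cycle_edges c)"
  unfolding is_cycle_on_def cycle_edges_def by simp

lemma is_path_on_iff: "is_path_on E P \<longleftrightarrow>
    (\<exists>p. p \<noteq> [] \<and> distinct p \<and> set p = P \<and> induced_edges E P = path_edges p)"
  unfolding is_path_on_def path_edges_def by simp

lemma is_cycle_on_nonempty: "is_cycle_on E C \<Longrightarrow> C \<noteq> {}"
  unfolding is_cycle_on_def by auto

lemma is_path_on_nonempty: "is_path_on E P \<Longrightarrow> P \<noteq> {}"
  unfolding is_path_on_def by auto

lemma card_le_card_induced_edges_cycle:
  "is_cycle_on E C \<Longrightarrow> card C \<le> card (induced_edges E C)"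
  by (auto simp: is_cycle_on_iff card_cycle_edges distinct_card)

lemma card_le_card_induced_edges_path:
  "is_path_on E P \<Longrightarrow> card P \<le> card (induced_edges E P) + 1"
  by (auto simp: is_path_on_iff card_path_edges distinct_card)

section \<open>Disjoint unions of cycles and boundedly many paths\<close>

definition cycles_and_paths :: "'a set set \<Rightarrow> 'a set \<Rightarrow> nat \<Rightarrow> bool" where
  "cycles_and_paths E U m \<longleftrightarrow> (\<exists>Cs Ps.
     finite Cs \<and> finite Ps \<and> Cs \<inter> Ps = {} \<and> card Ps \<le> m \<and>
     \<Union>(Cs \<union> Ps) = U \<and> pairwise disjnt (Cs \<union> Ps) \<and>
     (\<forall>e\<in>induced_edges E U. \<exists>A\<in>Cs \<union> Ps. e \<subseteq> A) \<and>
     (\<forall>A\<in>Cs. is_cycle_on E A) \<and> (\<forall>A\<in>Ps. is_path_on E A))"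

lemma cycles_and_paths_2: "cycles_and_paths E U 2 \<longleftrightarrow> cycles_and_two_paths E U"
  unfolding cycles_and_paths_def cycles_and_two_paths_def pairwise_def disjnt_def by simp

lemma cycles_and_paths_empty: "{} \<notin> E \<Longrightarrow> cycles_and_paths E {} m"
  unfolding cycles_and_paths_def induced_edges_def
  by (rule exI[of _ "{}"], rule exI[of _ "{}"]) auto

lemma cycles_and_paths_cycle: "is_cycle_on E C \<Longrightarrow> cycles_and_paths E C m"
  unfolding cycles_and_paths_def induced_edges_def
  by (rule exI[of _ "{C}"], rule exI[of _ "{}"]) auto

lemma cycles_and_paths_path: "is_path_on E P \<Longrightarrow> 0 < m \<Longrightarrow> cycles_and_paths E P m"
  unfolding cycles_and_paths_def induced_edges_def
  by (rule exI[of _ "{}"], rule exI[of _ "{P}"]) auto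

lemma pairwise_disjnt_Un:
  assumes "pairwise disjnt F" and "pairwise disjnt G" and "\<And>X Y. X \<in> F \<Longrightarrow> Y \<in> G \<Longrightarrow> disjnt X Y"
  shows "pairwise disjnt (F \<union> G)"
  unfolding pairwise_def
proof (intro ballI impI)
  fix X Y assume XY: "X \<in> F \<union> G" "Y \<in> F \<union> G" "X \<noteq> Y"
  then consider "X \<in> F" "Y \<in> F" | "X \<in> F" "Y \<in> G" | "X \<in> G" "Y \<in> F" | "X \<in> G" "Y \<in> G"
    by blast
  then show "disjnt X Y"
  proof cases
    case 1
    with assms(1) XY(3) show ?thesis unfolding pairwise_def by blast
  next
    case 2
    with assms(3) show ?thesis by blast
  next
    case 3
    with assms(3) have "disjnt Y X"
      by blast
    then show ?thesis
      by (rule disjnt_sym)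
  next
    case 4
    with assms(2) XY(3) show ?thesis unfolding pairwise_def by blast
  qed
qed

lemma cycles_and_paths_Un:
  assumes A: "cycles_and_paths E A m" and B: "cycles_and_paths E B m'"
    and disj: "A \<inter> B = {}" and no_cross: "\<forall>e\<in>E. e \<subseteq> A \<union> B \<longrightarrow> e \<subseteq> A \<or> e \<subseteq> B"
  shows "cycles_and_paths E (A \<union> B) (m + m')"
proof -
  obtain Cs Ps where
    A': "finite Cs" "finite Ps" "Cs \<inter> Ps = {}" "card Ps \<le> m" "\<Union>(Cs \<union> Ps) = A"
      "pairwise disjnt (Cs \<union> Ps)" "\<forall>e\<in>induced_edges E A. \<exists>X\<in>Cs \<union> Ps. e \<subseteq> X"
      "\<forall>X\<in>Cs. is_cycle_on E X" "\<forall>X\<in>Ps. is_path_on E X"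
    using A unfolding cycles_and_paths_def by blast
  obtain Cs' Ps' where
    B': "finite Cs'" "finite Ps'" "Cs' \<inter> Ps' = {}" "card Ps' \<le> m'" "\<Union>(Cs' \<union> Ps') = B"
      "pairwise disjnt (Cs' \<union> Ps')" "\<forall>e\<in>induced_edges E B. \<exists>X\<in>Cs' \<union> Ps'. e \<subseteq> X"
      "\<forall>X\<in>Cs'. is_cycle_on E X" "\<forall>X\<in>Ps'. is_path_on E X"
    using B unfolding cycles_and_paths_def by blast
  have apart: "disjnt X Y" if "X \<in> Cs \<union> Ps" "Y \<in> Cs' \<union> Ps'" for X Y
    using that A'(5) B'(5) disj unfolding disjnt_def by blast
  have "X \<notin> Cs' \<union> Ps'" if "X \<in> Cs \<union> Ps" for X
  proof -
    have "X \<noteq> {}"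
      using that A'(8,9) is_cycle_on_nonempty is_path_on_nonempty by blast
    then show ?thesis
      using apart[OF that] unfolding disjnt_def by auto
  qed
  then have sep: "(Cs \<union> Cs') \<inter> (Ps \<union> Ps') = {}"
    using A'(3) B'(3) by blast
  have pw: "pairwise disjnt (Cs \<union> Cs' \<union> (Ps \<union> Ps'))"
    using pairwise_disjnt_Un[OF A'(6) B'(6) apart] by (simp add: Un_ac)
  have inside: "\<exists>X\<in>Cs \<union> Cs' \<union> (Ps \<union> Ps'). e \<subseteq> X" if "e \<in> induced_edges E (A \<union> B)" for e
  proof -
    have "e \<in> induced_edges E A \<or> e \<in> induced_edges E B"
      using that no_cross unfolding induced_edges_def by blast
    then show ?thesis
      using A'(7) B'(7) by blast
  qed
  have card: "card (Ps \<union> Ps') \<le> m + m'"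
    using card_Un_le[of Ps Ps'] A'(4) B'(4) by linarith
  have union: "\<Union>(Cs \<union> Cs' \<union> (Ps \<union> Ps')) = A \<union> B"
    using A'(5) B'(5) by blast
  have fin: "finite (Cs \<union> Cs')" "finite (Ps \<union> Ps')"
    using A'(1,2) B'(1,2) by simp_all
  have pieces: "\<forall>X\<in>Cs \<union> Cs'. is_cycle_on E X" "\<forall>X\<in>Ps \<union> Ps'. is_path_on E X"
    using A'(8,9) B'(8,9) by auto
  show ?thesis
    unfolding cycles_and_paths_def
    by (rule exI[of _ "Cs \<union> Cs'"], rule exI[of _ "Ps \<union> Ps'"])
      (use fin sep card union pw inside pieces in blast)
qed

lemma card_induced_edges_Union:
  assumes no_loop: "{} \<notin> E" and "finite F" and fin: "\<And>X. X \<in> F \<Longrightarrow> finite X"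
    and disj: "pairwise disjnt F" and inside: "\<forall>e\<in>induced_edges E (\<Union>F). \<exists>X\<in>F. e \<subseteq> X"
  shows "card (induced_edges E (\<Union>F)) = (\<Sum>X\<in>F. card (induced_edges E X))"
proof -
  have "induced_edges E (\<Union>F) = (\<Union>X\<in>F. induced_edges E X)"
  proof
    show "induced_edges E (\<Union>F) \<subseteq> (\<Union>X\<in>F. induced_edges E X)"
      using inside unfolding induced_edges_def by blast
    show "(\<Union>X\<in>F. induced_edges E X) \<subseteq> induced_edges E (\<Union>F)"
      unfolding induced_edges_def by blast
  qed
  moreover have "finite (induced_edges E X)" if "X \<in> F" for X
  proof -
    have "induced_edges E X \<subseteq> Pow X"
      unfolding induced_edges_def by blast
    then show ?thesis
      using fin[OF that] by (simp add: finite_subset)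
  qed
  moreover have "induced_edges E X \<inter> induced_edges E Y = {}" if "X \<in> F" "Y \<in> F" "X \<noteq> Y" for X Y
  proof -
    have "X \<inter> Y = {}"
      using disj that unfolding pairwise_def disjnt_def by blast
    then have "e = {}" if "e \<subseteq> X" "e \<subseteq> Y" for e
      using that by blast
    then show ?thesis
      using no_loop unfolding induced_edges_def by blast
  qed
  ultimately show ?thesis
    using \<open>finite F\<close> by (simp add: card_UN_disjoint)
qed

lemma cycles_and_paths_card_le:
  assumes no_loop: "{} \<notin> E" and "finite U" and "cycles_and_paths E U m"
  shows "card U \<le> card (induced_edges E U) + m"
proof -
  obtain Cs Ps where
    U: "finite Cs" "finite Ps" "Cs \<inter> Ps = {}" "card Ps \<le> m" "\<Union>(Cs \<union> Ps) = U"
      "pairwise disjnt (Cs \<union> Ps)" "\<forall>e\<in>induced_edges E U. \<exists>X\<in>Cs \<union> Ps. e \<subseteq> X"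
      "\<forall>X\<in>Cs. is_cycle_on E X" "\<forall>X\<in>Ps. is_path_on E X"
    using assms(3) unfolding cycles_and_paths_def by blast
  let ?F = "Cs \<union> Ps"
  have fin: "finite X" if "X \<in> ?F" for X
    using that U(5) \<open>finite U\<close> by (meson Union_upper finite_subset)
  have card_U: "card U = (\<Sum>X\<in>?F. card X)"
    using card_Union_disjoint[OF U(6) fin] U(5) by simp
  have card_edges: "card (induced_edges E U) = (\<Sum>X\<in>?F. card (induced_edges E X))"
    using card_induced_edges_Union[OF no_loop _ fin U(6)] U(1,2,5,7) by simp
  have split: "(\<Sum>X\<in>?F. f X) = (\<Sum>X\<in>Cs. f X) + (\<Sum>X\<in>Ps. f X)" for f :: "'a set \<Rightarrow> nat"
    using U(1-3) by (rule sum.union_disjoint)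
  have "(\<Sum>X\<in>Cs. card X) \<le> (\<Sum>X\<in>Cs. card (induced_edges E X))"
    using U(8) card_le_card_induced_edges_cycle by (intro sum_mono) blast
  moreover have "(\<Sum>X\<in>Ps. card X) \<le> (\<Sum>X\<in>Ps. card (induced_edges E X) + 1)"
    using U(9) card_le_card_induced_edges_path by (intro sum_mono) blast
  ultimately have "card U \<le> card (induced_edges E U) + card Ps"
    unfolding card_U card_edges split by (simp add: sum_Suc)
  then show ?thesis
    using U(4) by linarith
qed

section \<open>Cycles that are connected components\<close>

definition component_cycle :: "'a set set \<Rightarrow> 'a list \<Rightarrow> bool" where
  "component_cycle E c \<longleftrightarrow> 3 \<le> length c \<and> distinct c \<and> {e \<in> E. e \<inter> set c \<noteq> {}} = cycle_edges c"

lemma component_cycle_distinct: "component_cycle E c \<Longrightarrow> distinct c"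
  unfolding component_cycle_def by simp

lemma component_cycle_length: "component_cycle E c \<Longrightarrow> 3 \<le> length c"
  unfolding component_cycle_def by simp

lemma component_cycle_cycle_edges: "component_cycle E c \<Longrightarrow> cycle_edges c \<subseteq> E"
  unfolding component_cycle_def by blast

lemma component_cycle_edge_at:
  "component_cycle E c \<Longrightarrow> e \<in> E \<Longrightarrow> x \<in> e \<Longrightarrow> x \<in> set c \<Longrightarrow> e \<in> cycle_edges c"
  unfolding component_cycle_def by blast

lemma component_cycle_edge_subset:
  assumes "component_cycle E c" and "e \<in> E" and "e \<inter> set c \<noteq> {}"
  shows "e \<subseteq> set c"
proof -
  obtain x where "x \<in> e" "x \<in> set c"
    using assms(3) by blast
  then show ?thesis
    using component_cycle_edge_at[OF assms(1,2)] cycle_edges_subset by blast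
qed

lemma component_cycle_edge_within:
  assumes "{} \<notin> E" and "component_cycle E c" and "e \<in> E" and "e \<subseteq> set c"
  shows "e \<in> cycle_edges c"
proof -
  have "e \<noteq> {}"
    using assms(1,3) by blast
  then obtain x where "x \<in> e"
    by blast
  with assms(4) have "x \<in> set c"
    by blast
  with assms(2,3) \<open>x \<in> e\<close> show ?thesis
    by (rule component_cycle_edge_at)
qed

lemma component_cycle_no_cross:
  assumes "component_cycle E c" and "A \<subseteq> set c" and "B \<inter> set c = {}"
  shows "\<forall>e\<in>E. e \<subseteq> A \<union> B \<longrightarrow> e \<subseteq> A \<or> e \<subseteq> B"
proof (intro ballI impI)
  fix e assume e: "e \<in> E" "e \<subseteq> A \<union> B"
  show "e \<subseteq> A \<or> e \<subseteq> B"
  proof (cases "e \<inter> A = {}")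
    case True
    then show ?thesis using e(2) by blast
  next
    case False
    then have "e \<subseteq> set c"
      using component_cycle_edge_subset[OF assms(1) e(1)] assms(2) by blast
    then show ?thesis
      using e(2) assms(3) by blast
  qed
qed

lemma is_cycle_on_component_cycle:
  assumes no_loop: "{} \<notin> E" and c: "component_cycle E c"
  shows "is_cycle_on E (set c)"
proof -
  have "induced_edges E (set c) = cycle_edges c"
  proof
    show "induced_edges E (set c) \<subseteq> cycle_edges c"
      using component_cycle_edge_within[OF no_loop c] unfolding induced_edges_def by blast
    show "cycle_edges c \<subseteq> induced_edges E (set c)"
      using component_cycle_cycle_edges[OF c] cycle_edges_subset
      unfolding induced_edges_def by blast
  qed
  then show ?thesis
    using c unfolding is_cycle_on_iff component_cycle_def by blast
qed

lemma is_path_on_arc: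
  assumes no_loop: "{} \<notin> E" and c: "component_cycle E c"
    and "a < length c" and "0 < l" and not_whole: "\<not> (a = 0 \<and> length c \<le> l)"
  shows "is_path_on E (set (take l (drop a c)))"
proof -
  let ?p = "take l (drop a c)"
  have "induced_edges E (set ?p) = path_edges ?p"
  proof
    show "induced_edges E (set ?p) \<subseteq> path_edges ?p"
    proof
      fix e assume "e \<in> induced_edges E (set ?p)"
      then have e: "e \<in> E" "e \<subseteq> set ?p"
        unfolding induced_edges_def by auto
      have "e \<subseteq> set c"
        using e(2) set_take_drop_subset by (rule subset_trans)
      with e(1) have "e \<in> cycle_edges c"
        by (rule component_cycle_edge_within[OF no_loop c])
      then show "e \<in> path_edges ?p"
        by (rule cycle_edge_within_take_drop[OF component_cycle_distinct[OF c] _ e(2) not_whole])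
    qed
    show "path_edges ?p \<subseteq> induced_edges E (set ?p)"
    proof
      fix e assume "e \<in> path_edges ?p"
      then have "e \<in> E"
        using path_edges_take_drop_subset component_cycle_cycle_edges[OF c] by blast
      moreover have "e \<subseteq> set ?p"
        using path_edges_subset[OF \<open>e \<in> path_edges ?p\<close>] .
      ultimately show "e \<in> induced_edges E (set ?p)"
        unfolding induced_edges_def by simp
    qed
  qed
  moreover have "distinct ?p" "?p \<noteq> []"
    using component_cycle_distinct[OF c] assms(3,4) by simp_all
  ultimately show ?thesis
    unfolding is_path_on_iff by (intro exI[of _ ?p]) simp
qed

lemma cycles_and_paths_arc:
  assumes no_loop: "{} \<notin> E" and c: "component_cycle E c"
  shows "cycles_and_paths E (set (take l (drop a c))) 1"
proof -
  consider "length c \<le> a \<or> l = 0" | "a = 0" "length c \<le> l" | "a < length c" "0 < l" "\<not> (a = 0 \<and> length c \<le> l)"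
    by linarith
  then show ?thesis
  proof cases
    case 1
    then show ?thesis
      using cycles_and_paths_empty[OF no_loop] by auto
  next
    case 2
    then show ?thesis
      using cycles_and_paths_cycle is_cycle_on_component_cycle[OF assms] by simp
  next
    case 3
    then show ?thesis
      by (intro cycles_and_paths_path is_path_on_arc[OF assms]) simp_all
  qed
qed

definition cycle_decomposition :: "'a set set \<Rightarrow> 'a list list \<Rightarrow> bool" where
  "cycle_decomposition E cs \<longleftrightarrow> (\<forall>c\<in>set cs. component_cycle E c) \<and> distinct (concat cs)"

lemma cycle_decomposition_Cons:
  "cycle_decomposition E (c # cs) \<longleftrightarrow>
     component_cycle E c \<and> cycle_decomposition E cs \<and> distinct c \<and> set c \<inter> set (concat cs) = {}"
  unfolding cycle_decomposition_def by auto

lemma cycles_and_paths_prefix: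
  assumes no_loop: "{} \<notin> E"
  shows "cycle_decomposition E cs \<Longrightarrow> cycles_and_paths E (set (take l (concat cs))) 1"
proof (induction cs arbitrary: l)
  case Nil
  then show ?case
    using cycles_and_paths_empty[OF no_loop] by simp
next
  case (Cons c cs)
  then have c: "component_cycle E c" and cs: "cycle_decomposition E cs"
    and disj: "set c \<inter> set (concat cs) = {}"
    by (simp_all add: cycle_decomposition_Cons)
  show ?case
  proof (cases "length c \<le> l")
    case True
    let ?rest = "set (take (l - length c) (concat cs))"
    have "?rest \<inter> set c = {}"
      using disj by (meson disjoint_iff in_set_takeD)
    then have "cycles_and_paths E (set c \<union> ?rest) (0 + 1)"
      using cycles_and_paths_cycle[OF is_cycle_on_component_cycle[OF no_loop c]] Cons.IH[OF cs]
      by (intro cycles_and_paths_Un component_cycle_no_cross[OF c]) auto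
    with True show ?thesis
      by simp
  next
    case False
    then show ?thesis
      using cycles_and_paths_arc[OF no_loop c, of l 0] by simp
  qed
qed

lemma cycles_and_paths_segment:
  assumes no_loop: "{} \<notin> E"
  shows "cycle_decomposition E cs \<Longrightarrow> cycles_and_paths E (set (take l (drop a (concat cs)))) 2"
proof (induction cs arbitrary: a)
  case Nil
  then show ?case
    using cycles_and_paths_empty[OF no_loop] by simp
next
  case (Cons c cs)
  then have c: "component_cycle E c" and cs: "cycle_decomposition E cs"
    and disj: "set c \<inter> set (concat cs) = {}"
    by (simp_all add: cycle_decomposition_Cons)
  show ?case
  proof (cases "length c \<le> a")
    case True
    then show ?thesis
      using Cons.IH[OF cs] by simp
  next
    case False
    let ?arc = "set (take l (drop a c))"
    let ?rest = "set (take (l - (length c - a)) (concat cs))"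
    have "?arc \<subseteq> set c"
      by (rule set_take_drop_subset)
    moreover have "?rest \<inter> set c = {}"
      using disj by (meson disjoint_iff in_set_takeD)
    ultimately have "cycles_and_paths E (?arc \<union> ?rest) (1 + 1)"
      using cycles_and_paths_arc[OF no_loop c] cycles_and_paths_prefix[OF no_loop cs]
      by (intro cycles_and_paths_Un component_cycle_no_cross[OF c]) auto
    with False show ?thesis
      by (simp add: numeral_2_eq_2)
  qed
qed

section \<open>Two-factors decompose into component cycles\<close>

lemma two_factor_simple_graph: "two_factor V E \<Longrightarrow> simple_graph V E"
  unfolding two_factor_def by simp

lemma simple_graph_edge_at:
  assumes "simple_graph V E" and "e \<in> E" and "x \<in> e"
  obtains y where "e = {x, y}" and "x \<noteq> y" and "x \<in> V" and "y \<in> V"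
proof -
  obtain u v where uv: "u \<noteq> v" "e = {u, v}" "u \<in> V" "v \<in> V"
    using assms(1,2) unfolding simple_graph_def by blast
  then consider "x = u" | "x = v"
    using assms(3) by blast
  then show thesis
  proof cases
    case 1
    with uv show thesis by (intro that[of v]) auto
  next
    case 2
    with uv show thesis by (intro that[of u]) auto
  qed
qed

lemma simple_graph_empty_not_edge:
  assumes "simple_graph V E"
  shows "{} \<notin> E"
proof
  assume "{} \<in> E"
  then obtain u v where "{} = {u, v}"
    using assms unfolding simple_graph_def by blast
  then show False
    by simp
qed

lemma simple_graph_edge_neq:
  assumes "simple_graph V E" and "{x, y} \<in> E"
  shows "x \<noteq> y"
proof
  assume "x = y"
  with assms(2) have "{x} \<in> E"
    by simp
  then obtain z where "{x} = {x, z}" "x \<noteq> z"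
    using simple_graph_edge_at[OF assms(1), of "{x}" x] by blast
  then show False
    by (metis insertCI singletonD)
qed

lemma simple_graph_finite_edges:
  assumes "simple_graph V E"
  shows "finite E"
proof -
  have "E \<subseteq> Pow V"
  proof
    fix e assume "e \<in> E"
    then obtain u v where "e = {u, v}" "u \<in> V" "v \<in> V"
      using assms unfolding simple_graph_def by blast
    then show "e \<in> Pow V"
      by simp
  qed
  moreover have "finite V"
    using assms unfolding simple_graph_def by blast
  ultimately show ?thesis
    by (simp add: finite_subset)
qed

lemma two_factor_edges_at:
  assumes "two_factor V E" and "v \<in> V"
    and "a \<in> E" "b \<in> E" "v \<in> a" "v \<in> b" "a \<noteq> b"
  shows "{e \<in> E. v \<in> e} = {a, b}"
proof -
  have "finite {e \<in> E. v \<in> e}"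
    using simple_graph_finite_edges[OF two_factor_simple_graph[OF assms(1)]] by simp
  moreover have "{a, b} \<subseteq> {e \<in> E. v \<in> e}"
    using assms by blast
  moreover have "card {a, b} = card {e \<in> E. v \<in> e}"
    using assms unfolding two_factor_def degree_def by simp
  ultimately show ?thesis
    by (rule card_subset_eq[symmetric])
qed

lemma two_factor_two_neighbours:
  assumes "two_factor V E" and "v \<in> V"
  obtains u w where "{v, u} \<in> E" "{v, w} \<in> E" "u \<noteq> w" "u \<in> V" "w \<in> V"
proof -
  have "card {e \<in> E. v \<in> e} = 2"
    using assms unfolding two_factor_def degree_def by simp
  then obtain a b where ab: "{e \<in> E. v \<in> e} = {a, b}" "a \<noteq> b"
    by (auto simp: card_2_iff)
  have sg: "simple_graph V E"
    using two_factor_simple_graph[OF assms(1)] .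
  have "a \<in> E" "v \<in> a" "b \<in> E" "v \<in> b"
    using ab(1) by blast+
  obtain u where "a = {v, u}" "u \<in> V"
    using simple_graph_edge_at[OF sg \<open>a \<in> E\<close> \<open>v \<in> a\<close>] by blast
  moreover obtain w where "b = {v, w}" "w \<in> V"
    using simple_graph_edge_at[OF sg \<open>b \<in> E\<close> \<open>v \<in> b\<close>] by blast
  ultimately show thesis
    using that \<open>a \<in> E\<close> \<open>b \<in> E\<close> ab(2) by blast
qed

lemma two_factor_component_cycle:
  assumes tf: "two_factor V E" and "3 \<le> length c" and "distinct c" and "set c \<subseteq> V"
    and cyc: "cycle_edges c \<subseteq> E"
  shows "component_cycle E c"
proof -
  have edge_at: "e \<in> cycle_edges c" if e: "e \<in> E" "z \<in> e" and z: "z \<in> set c" for e z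
  proof -
    obtain A B where AB: "A \<in> cycle_edges c" "B \<in> cycle_edges c" "A \<noteq> B" "z \<in> A" "z \<in> B"
      by (rule two_cycle_edges_at[OF assms(3,2) z])
    then have "{e \<in> E. z \<in> e} = {A, B}"
      using cyc z assms(4) by (intro two_factor_edges_at[OF tf]) auto
    moreover have "e \<in> {e \<in> E. z \<in> e}"
      using e by simp
    ultimately have "e = A \<or> e = B"
      by simp
    with AB(1,2) show ?thesis
      by metis
  qed
  have meets: "e \<inter> set c \<noteq> {}" if "e \<in> cycle_edges c" for e
  proof -
    have "e \<noteq> {}"
      using that cyc simple_graph_empty_not_edge[OF two_factor_simple_graph[OF tf]] by blast
    then show ?thesis
      using cycle_edges_subset[OF that] by blast
  qed
  have "{e \<in> E. e \<inter> set c \<noteq> {}} = cycle_edges c"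
  proof
    show "{e \<in> E. e \<inter> set c \<noteq> {}} \<subseteq> cycle_edges c"
    proof
      fix e assume "e \<in> {e \<in> E. e \<inter> set c \<noteq> {}}"
      then obtain z where "e \<in> E" "z \<in> e" "z \<in> set c"
        by blast
      then show "e \<in> cycle_edges c"
        by (rule edge_at)
    qed
    show "cycle_edges c \<subseteq> {e \<in> E. e \<inter> set c \<noteq> {}}"
      using cyc meets by blast
  qed
  with assms show ?thesis
    unfolding component_cycle_def by blast
qed

definition simple_path :: "'a set set \<Rightarrow> 'a set \<Rightarrow> 'a list \<Rightarrow> bool" where
  "simple_path E V p \<longleftrightarrow> p \<noteq> [] \<and> distinct p \<and> set p \<subseteq> V \<and> path_edges p \<subseteq> E"

lemma simple_path_snoc:
  assumes "simple_path E V p" and "y \<in> V" and "y \<notin> set p" and "{last p, y} \<in> E"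
  shows "simple_path E V (p @ [y])"
proof -
  have "insert {last p, y} (path_edges p) \<subseteq> E"
    using assms(1,4) unfolding simple_path_def by simp
  moreover have "p \<noteq> []"
    using assms(1) unfolding simple_path_def by simp
  ultimately have "path_edges (p @ [y]) \<subseteq> E"
    using path_edges_snoc_subset[of p y] by blast
  with assms show ?thesis
    unfolding simple_path_def by simp
qed

lemma ex_longest_simple_path:
  assumes "finite V" and "v \<in> V"
  shows "\<exists>p. simple_path E V p \<and> (\<forall>q. simple_path E V q \<longrightarrow> length q \<le> length p)"
proof -
  have "simple_path E V [v]"
    using assms(2) unfolding simple_path_def path_edges_def by simp
  moreover have "length q < Suc (card V)" if "simple_path E V q" for q
  proof -
    have "length q = card (set q)"
      using that distinct_card[of q] unfolding simple_path_def by simp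
    also have "\<dots> \<le> card V"
      using that card_mono[OF assms(1)] unfolding simple_path_def by simp
    finally show ?thesis
      by simp
  qed
  ultimately show ?thesis
    using ex_has_greatest_nat[of "simple_path E V" "[v]" length "Suc (card V)"] by blast
qed

lemma longest_simple_path_neighbour:
  assumes "simple_path E V p" and longest: "\<And>q. simple_path E V q \<Longrightarrow> length q \<le> length p"
    and "{last p, y} \<in> E" and "y \<in> V"
  shows "y \<in> set p"
proof (rule ccontr)
  assume "y \<notin> set p"
  with assms have "simple_path E V (p @ [y])"
    by (intro simple_path_snoc)
  then show False
    using longest[of "p @ [y]"] by simp
qed

lemma two_factor_simple_path_inner_edge:
  assumes tf: "two_factor V E" and p: "simple_path E V p"
    and j: "0 < j" "Suc j < length p" and u: "{u, p ! j} \<in> E"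
  shows "u = p ! (j - 1) \<or> u = p ! Suc j"
proof -
  have "distinct p"
    using p unfolding simple_path_def by simp
  have "{p ! (j - 1), p ! j} \<in> E" "{p ! j, p ! Suc j} \<in> E"
    using p j path_edgesI[of "j - 1" p] path_edgesI[of j p] unfolding simple_path_def by auto
  moreover have "p ! (j - 1) \<noteq> p ! j" "p ! (j - 1) \<noteq> p ! Suc j" "p ! Suc j \<noteq> p ! j"
    using \<open>distinct p\<close> j by (simp_all add: nth_eq_iff_index_eq)
  moreover have "p ! j \<in> V"
    using p j unfolding simple_path_def by auto
  ultimately have "{e \<in> E. p ! j \<in> e} = {{p ! (j - 1), p ! j}, {p ! j, p ! Suc j}}"
    by (intro two_factor_edges_at[OF tf]) (simp_all add: doubleton_eq_iff)
  moreover have "{u, p ! j} \<in> {e \<in> E. p ! j \<in> e}"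
    using u by simp
  ultimately have "{u, p ! j} = {p ! (j - 1), p ! j} \<or> {u, p ! j} = {p ! j, p ! Suc j}"
    by simp
  then show ?thesis
    by (metis doubleton_eq_iff)
qed

lemma two_factor_longest_simple_path_closes:
  assumes tf: "two_factor V E" and p: "simple_path E V p"
    and longest: "\<And>q. simple_path E V q \<Longrightarrow> length q \<le> length p"
  shows "3 \<le> length p" and "{last p, hd p} \<in> E"
proof -
  let ?L = "length p"
  let ?x = "last p"
  have "p \<noteq> []" "distinct p" "set p \<subseteq> V"
    using p unfolding simple_path_def by auto
  then have x: "?x = p ! (?L - 1)" "?x \<in> V"
    by (auto simp: last_conv_nth)
  obtain u w where uw: "{?x, u} \<in> E" "{?x, w} \<in> E" "u \<noteq> w" "u \<in> V" "w \<in> V"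
    using two_factor_two_neighbours[OF tf x(2)] by blast
  have "u \<noteq> p ! (?L - 2) \<or> w \<noteq> p ! (?L - 2)"
    using uw(3) by blast
  then obtain y where y: "{?x, y} \<in> E" "y \<in> V" "y \<noteq> p ! (?L - 2)"
    using uw(1,2,4,5) by blast
  have "y \<in> set p"
    using longest_simple_path_neighbour[OF p longest y(1,2)] .
  then obtain j where j: "j < ?L" "p ! j = y"
    by (auto simp: in_set_conv_nth)
  have "y \<noteq> ?x"
    using simple_graph_edge_neq[OF two_factor_simple_graph[OF tf] y(1)] by simp
  then have "j \<noteq> ?L - 1" "j \<noteq> ?L - 2"
    using j y(3) x(1) by auto
  then have "Suc (Suc j) < ?L"
    using j(1) by linarith
  then show "3 \<le> ?L"
    by linarith
  have "j = 0"
  proof (rule ccontr)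
    assume "j \<noteq> 0"
    then have "?x = p ! (j - 1) \<or> ?x = p ! Suc j"
      using two_factor_simple_path_inner_edge[OF tf p, of j ?x] y(1) j \<open>Suc (Suc j) < ?L\<close> by simp
    then show False
      using x(1) \<open>distinct p\<close> \<open>Suc (Suc j) < ?L\<close> by (auto simp: nth_eq_iff_index_eq)
  qed
  then show "{last p, hd p} \<in> E"
    using y(1) j(2) \<open>p \<noteq> []\<close> by (simp add: hd_conv_nth)
qed

lemma two_factor_ex_component_cycle:
  assumes tf: "two_factor V E" and "V \<noteq> {}"
  obtains c where "component_cycle E c" and "set c \<subseteq> V"
proof -
  obtain v where "v \<in> V"
    using assms(2) by blast
  have "finite V"
    using two_factor_simple_graph[OF tf] unfolding simple_graph_def by simp
  obtain p where p: "simple_path E V p"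
    and longest: "\<forall>q. simple_path E V q \<longrightarrow> length q \<le> length p"
    using ex_longest_simple_path[OF \<open>finite V\<close> \<open>v \<in> V\<close>] by blast
  have "p \<noteq> []" "distinct p" "set p \<subseteq> V" "path_edges p \<subseteq> E"
    using p unfolding simple_path_def by simp_all
  have "insert {last p, hd p} (path_edges p) \<subseteq> E"
    using two_factor_longest_simple_path_closes(2)[OF tf p longest[rule_format]] \<open>path_edges p \<subseteq> E\<close>
    by simp
  then have "cycle_edges p \<subseteq> E"
    by (rule subset_trans[OF cycle_edges_subset_path_edges[OF \<open>p \<noteq> []\<close>]])
  then have "component_cycle E p"
    using two_factor_longest_simple_path_closes(1)[OF tf p longest[rule_format]] \<open>distinct p\<close> \<open>set p \<subseteq> V\<close>
    by (intro two_factor_component_cycle[OF tf])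
  then show thesis
    using \<open>set p \<subseteq> V\<close> by (rule that)
qed

lemma two_factor_Diff_component_cycle:
  assumes tf: "two_factor V E" and c: "component_cycle E c"
  shows "two_factor (V - set c) {e \<in> E. e \<inter> set c = {}}"
proof -
  let ?E = "{e \<in> E. e \<inter> set c = {}}"
  have sg: "simple_graph V E"
    using two_factor_simple_graph[OF tf] .
  have "simple_graph (V - set c) ?E"
    unfolding simple_graph_def
  proof (intro conjI ballI)
    show "finite (V - set c)"
      using sg unfolding simple_graph_def by simp
    fix e assume "e \<in> ?E"
    then have "e \<in> E" "e \<inter> set c = {}"
      by simp_all
    then obtain u v where "u \<noteq> v" "e = {u, v}" "u \<in> V" "v \<in> V"
      using sg unfolding simple_graph_def by blast
    with \<open>e \<inter> set c = {}\<close> show "\<exists>u v. u \<noteq> v \<and> e = {u, v} \<and> u \<in> V - set c \<and> v \<in> V - set c"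
      by blast
  qed
  moreover have "{e \<in> ?E. v \<in> e} = {e \<in> E. v \<in> e}" if "v \<notin> set c" for v
  proof -
    have "e \<inter> set c = {}" if "e \<in> E" "v \<in> e" for e
      using component_cycle_edge_subset[OF c \<open>e \<in> E\<close>] \<open>v \<in> e\<close> \<open>v \<notin> set c\<close> by blast
    then show ?thesis
      by auto
  qed
  ultimately show ?thesis
    using tf unfolding two_factor_def degree_def by simp
qed

lemma component_cycle_of_Diff:
  assumes c: "component_cycle E c" and d: "component_cycle {e \<in> E. e \<inter> set c = {}} d"
    and "set d \<inter> set c = {}"
  shows "component_cycle E d"
proof -
  have "e \<inter> set c = {}" if "e \<in> E" "e \<inter> set d \<noteq> {}" for e
    using component_cycle_edge_subset[OF c \<open>e \<in> E\<close>] that(2) assms(3) by blast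
  then have "{e \<in> E. e \<inter> set d \<noteq> {}} = {e \<in> {e \<in> E. e \<inter> set c = {}}. e \<inter> set d \<noteq> {}}"
    by auto
  with d show ?thesis
    unfolding component_cycle_def by simp
qed

lemma cycle_decomposition_Cons_Diff:
  assumes c: "component_cycle E c" and cs: "cycle_decomposition {e \<in> E. e \<inter> set c = {}} cs"
    and disj: "set (concat cs) \<inter> set c = {}"
  shows "cycle_decomposition E (c # cs)"
proof -
  have "component_cycle E d" if "d \<in> set cs" for d
  proof (rule component_cycle_of_Diff[OF c])
    show "component_cycle {e \<in> E. e \<inter> set c = {}} d"
      using cs that unfolding cycle_decomposition_def by blast
    show "set d \<inter> set c = {}"
      using disj that by auto
  qed
  moreover have "distinct (c @ concat cs)"
    using component_cycle_distinct[OF c] cs disj unfolding cycle_decomposition_def by auto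
  ultimately show ?thesis
    using c unfolding cycle_decomposition_def by simp
qed

lemma two_factor_cycle_decomposition:
  "two_factor V E \<Longrightarrow> \<exists>cs. cycle_decomposition E cs \<and> set (concat cs) = V"
proof (induction "card V" arbitrary: V E rule: less_induct)
  case less
  show ?case
  proof (cases "V = {}")
    case True
    then show ?thesis
      unfolding cycle_decomposition_def by (intro exI[of _ "[]"]) simp
  next
    case False
    then obtain c where c: "component_cycle E c" and "set c \<subseteq> V"
      by (rule two_factor_ex_component_cycle[OF less.prems])
    obtain x where "x \<in> set c"
      using component_cycle_length[OF c] by (cases c) auto
    then have "x \<in> V" "x \<notin> V - set c"
      using \<open>set c \<subseteq> V\<close> by auto
    then have "V - set c \<subset> V"
      by blast
    moreover have "finite V"
      using two_factor_simple_graph[OF less.prems] unfolding simple_graph_def by simp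
    ultimately have "card (V - set c) < card V"
      by (rule psubset_card_mono[rotated])
    then obtain cs where cs: "cycle_decomposition {e \<in> E. e \<inter> set c = {}} cs"
      and cs_V: "set (concat cs) = V - set c"
      using less.hyps[OF _ two_factor_Diff_component_cycle[OF less.prems c]] by blast
    have "set (concat cs) \<inter> set c = {}"
      using cs_V by blast
    then have "cycle_decomposition E (c # cs)"
      by (rule cycle_decomposition_Cons_Diff[OF c cs])
    moreover have "set (concat (c # cs)) = V"
      using cs_V \<open>set c \<subseteq> V\<close> by auto
    ultimately show ?thesis
      by blast
  qed
qed

lemma two_factor_ex_vertex_list:
  assumes "two_factor V E"
  shows "\<exists>xs. distinct xs \<and> set xs = V \<and> (\<forall>l a. cycles_and_paths E (set (take l (drop a xs))) 2)"
proof -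
  obtain cs where cs: "cycle_decomposition E cs" "set (concat cs) = V"
    using two_factor_cycle_decomposition[OF assms] by blast
  have "{} \<notin> E"
    using simple_graph_empty_not_edge[OF two_factor_simple_graph[OF assms]] .
  then have "\<forall>l a. cycles_and_paths E (set (take l (drop a (concat cs)))) 2"
    using cycles_and_paths_segment[OF _ cs(1)] by blast
  moreover have "distinct (concat cs)"
    using cs(1) unfolding cycle_decomposition_def by simp
  ultimately show ?thesis
    using cs(2) by blast
qed

section \<open>Cutting a vertex list into blocks\<close>

definition block :: "nat \<Rightarrow> 'a list \<Rightarrow> nat \<Rightarrow> 'a set" where
  "block k xs b = set (take k (drop (b * k) xs))"

lemma div_eq_iff_bounds:
  fixes p k b :: nat
  assumes "0 < k"
  shows "p div k = b \<longleftrightarrow> b * k \<le> p \<and> p < b * k + k"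
proof
  assume "p div k = b"
  then have "b * k + p mod k = p"
    using div_mult_mod_eq[of p k] by simp
  moreover have "p mod k < k"
    using assms by simp
  ultimately show "b * k \<le> p \<and> p < b * k + k"
    by linarith
next
  assume "b * k \<le> p \<and> p < b * k + k"
  then show "p div k = b"
    by (intro div_nat_eqI) (simp_all add: mult.commute)
qed

lemma nth_in_block_iff:
  assumes "distinct xs" and "0 < k" and "p < length xs"
  shows "xs ! p \<in> block k xs b \<longleftrightarrow> p div k = b"
  unfolding block_def
  using nth_in_set_take_drop_iff[OF assms(1,3)] div_eq_iff_bounds[OF assms(2)] by simp

lemma block_subset: "block k xs b \<subseteq> set xs"
  unfolding block_def by (rule set_take_drop_subset)

lemma Union_blocks:
  assumes "distinct xs" and "0 < k"
  shows "(\<Union>b\<le>length xs div k. block k xs b) = set xs"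
proof
  show "(\<Union>b\<le>length xs div k. block k xs b) \<subseteq> set xs"
    by (rule UN_least) (rule block_subset)
  show "set xs \<subseteq> (\<Union>b\<le>length xs div k. block k xs b)"
  proof
    fix x assume "x \<in> set xs"
    then obtain p where p: "p < length xs" "x = xs ! p"
      by (auto simp: in_set_conv_nth)
    then have "x \<in> block k xs (p div k)"
      using nth_in_block_iff[OF assms p(1)] by simp
    moreover have "p div k \<le> length xs div k"
      using p(1) by (simp add: div_le_mono)
    ultimately show "x \<in> (\<Union>b\<le>length xs div k. block k xs b)"
      by blast
  qed
qed

lemma blocks_disjoint:
  assumes "distinct xs" and "0 < k" and "b \<noteq> b'"
  shows "block k xs b \<inter> block k xs b' = {}"
proof (rule ccontr)
  assume "block k xs b \<inter> block k xs b' \<noteq> {}"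
  then obtain x where x: "x \<in> block k xs b" "x \<in> block k xs b'"
    by blast
  have "x \<in> set xs"
    using subsetD[OF block_subset x(1)] .
  then obtain p where "p < length xs" "x = xs ! p"
    by (auto simp: in_set_conv_nth)
  then show False
    using x nth_in_block_iff[OF assms(1,2)] assms(3) by simp
qed

lemma card_block:
  assumes "distinct xs"
  shows "card (block k xs b) = min k (length xs - b * k)"
  using assms unfolding block_def by (simp add: distinct_card)

lemma card_block_full:
  assumes "distinct xs" and "b < length xs div k"
  shows "card (block k xs b) = k"
proof -
  have "(b + 1) * k \<le> length xs div k * k"
    using assms(2) by (intro mult_le_mono1) simp
  also have "\<dots> \<le> length xs"
    by (simp add: div_times_less_eq_dividend)
  finally show ?thesis
    unfolding card_block[OF assms(1)] by simp
qed

lemma card_last_block: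
  assumes "distinct xs" and "0 < k"
  shows "card (block k xs (length xs div k)) < k"
  unfolding card_block[OF assms(1)] using assms(2) by (simp add: minus_div_mult_eq_mod)

lemma bij_betw_rotate_index:
  fixes q :: nat
  shows "bij_betw (\<lambda>i. if i = 0 then q else i - 1) {0..q} {..q}"
proof (rule bij_betw_imageI)
  show "inj_on (\<lambda>i. if i = 0 then q else i - 1) {0..q}"
    by (rule inj_onI) (auto split: if_splits)
  show "(\<lambda>i. if i = 0 then q else i - 1) ` {0..q} = {..q}"
  proof
    show "(\<lambda>i. if i = 0 then q else i - 1) ` {0..q} \<subseteq> {..q}"
      by auto
    show "{..q} \<subseteq> (\<lambda>i. if i = 0 then q else i - 1) ` {0..q}"
    proof
      fix j assume "j \<in> {..q}"
      then have "j = (\<lambda>i. if i = 0 then q else i - 1) (if j = q then 0 else Suc j)"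
        and "(if j = q then 0 else Suc j) \<in> {0..q}"
        by auto
      then show "j \<in> (\<lambda>i. if i = 0 then q else i - 1) ` {0..q}"
        by (rule image_eqI)
    qed
  qed
qed

lemma ex_block_partition:
  fixes xs :: "'a list"
  assumes "distinct xs" and "0 < k" and P: "\<And>b. P (block k xs b)"
  defines "q \<equiv> length xs div k"
  shows "\<exists>U. (\<Union>i\<in>{0..q}. U i) = set xs \<and>
    (\<forall>i\<in>{0..q}. \<forall>j\<in>{0..q}. i \<noteq> j \<longrightarrow> U i \<inter> U j = {}) \<and>
    (\<forall>i\<in>{1..q}. card (U i) = k) \<and> card (U 0) < k \<and> (\<forall>i. P (U i))"
proof -
  \<comment> \<open>U i is block number b i; the incomplete last block becomes U 0\<close>
  define b where "b i = (if i = 0 then q else i - 1)" for i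
  define U where "U i = block k xs (b i)" for i
  have b: "bij_betw b {0..q} {..q}"
    unfolding b_def by (rule bij_betw_rotate_index)
  have "(\<Union>i\<in>{0..q}. U i) = (\<Union>j\<in>b ` {0..q}. block k xs j)"
    unfolding U_def by simp
  also have "\<dots> = set xs"
    unfolding bij_betw_imp_surj_on[OF b] unfolding q_def by (rule Union_blocks[OF assms(1,2)])
  finally have cover: "(\<Union>i\<in>{0..q}. U i) = set xs" .
  have disjoint: "U i \<inter> U j = {}" if "i \<in> {0..q}" "j \<in> {0..q}" "i \<noteq> j" for i j
    using inj_on_contraD[OF bij_betw_imp_inj_on[OF b] that(3,1,2)] blocks_disjoint[OF assms(1,2)]
    unfolding U_def by blast
  have card_full: "card (U i) = k" if "i \<in> {1..q}" for i
  proof -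
    have "i - 1 < length xs div k"
      using that unfolding q_def by auto
    then show ?thesis
      using card_block_full[OF assms(1)] that unfolding U_def b_def by simp
  qed
  have card_0: "card (U 0) < k"
    using card_last_block[OF assms(1,2)] unfolding U_def b_def q_def by simp
  show ?thesis
  proof (intro exI[of _ U] conjI)
    show "\<forall>i\<in>{0..q}. \<forall>j\<in>{0..q}. i \<noteq> j \<longrightarrow> U i \<inter> U j = {}"
      using disjoint by blast
    show "\<forall>i\<in>{1..q}. card (U i) = k"
      using card_full by blast
    show "\<forall>i. P (U i)"
      unfolding U_def using P by blast
  qed (fact cover card_0)+
qed

theorem lemma3p7:
  fixes V :: "'a set" and E :: "'a set set" and k n :: nat
  assumes "k > 0" and "two_factor V E" and "card V = n"
  shows "\<exists>U :: nat \<Rightarrow> 'a set.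
           (\<Union>i\<in>{0..n div k}. U i) = V \<and>
           (\<forall>i\<in>{0..n div k}. \<forall>j\<in>{0..n div k}. i \<noteq> j \<longrightarrow> U i \<inter> U j = {}) \<and>
           (\<forall>i\<in>{1..n div k}. card (U i) = k) \<and>
           card (U 0) < k \<and>
           (\<forall>i\<in>{0..n div k}. cycles_and_two_paths E (U i)) \<and>
           (\<forall>i\<in>{1..n div k}. card (induced_edges E (U i)) \<ge> k - 2)"
proof -
  have no_loop: "{} \<notin> E"
    using simple_graph_empty_not_edge[OF two_factor_simple_graph[OF assms(2)]] .
  obtain xs where xs: "distinct xs" "set xs = V"
    and segments: "\<forall>l a. cycles_and_paths E (set (take l (drop a xs))) 2"
    using two_factor_ex_vertex_list[OF assms(2)] by blast
  have "length xs = n"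
    using distinct_card[OF xs(1)] xs(2) assms(3) by simp
  have "finite (block k xs b) \<and> cycles_and_paths E (block k xs b) 2" for b
    using segments unfolding block_def by simp
  from ex_block_partition[OF xs(1) assms(1), of "\<lambda>U. finite U \<and> cycles_and_paths E U 2", OF this]
  obtain U where U: "(\<Union>i\<in>{0..n div k}. U i) = V"
      "\<forall>i\<in>{0..n div k}. \<forall>j\<in>{0..n div k}. i \<noteq> j \<longrightarrow> U i \<inter> U j = {}"
      "\<forall>i\<in>{1..n div k}. card (U i) = k" "card (U 0) < k"
    and good: "\<And>i. finite (U i)" "\<And>i. cycles_and_paths E (U i) 2"
    unfolding xs(2) \<open>length xs = n\<close> by blast
  have "card (U i) \<le> card (induced_edges E (U i)) + 2" for i
    using cycles_and_paths_card_le[OF no_loop good(1,2)] .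
  with U(3) have "\<forall>i\<in>{1..n div k}. k - 2 \<le> card (induced_edges E (U i))"
    by (metis le_diff_conv)
  with U good(2) show ?thesis
    unfolding cycles_and_paths_2 by (intro exI[of _ U]) simp
qed

end
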